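(* $\mathrm{Aut}_0(H)$ is a normal subgroup of $\mathrm{Aut}_c(H)$, and $\mathrm{Aut}_c(H)$ is the internal semidirect product of $\mathrm{Aut}_0(H)$ and $\Theta=\{\theta_r:r\in\mathbb{Z}\}$, where $\theta_r:H\to H$ is the linear map $\theta_r(x^ny^m)=x^{n+r}y^m$.
   Context: Let $k$ be a field and $0\neq q\in k$ not a root of unity. $H=k_q[x,x^{-1},y]$ is the $k$-algebra generated by $x,x^{-1},y$ with $xx^{-1}=x^{-1}x=1$, $yx=qxy$, a Hopf algebra with $\Delta(x)=x\otimes x$, $\Delta(x^{-1})=x^{-1}\otimes x^{-1}$, $\Delta(y)=y\otimes x+1\otimes y$, $\varepsilon(x)=1$, $\varepsilon(y)=0$; $\{x^ny^m:n\in\mathbb{Z},m\in\mathbb{N}\}$ is a $k$-basis. $\mathrm{Aut}_c(H)$ is the group under composition of coalgebra automorphisms of $H$ and $\mathrm{Aut}_0(H)=\{\phi\in\mathrm{Aut}_c(H):\phi(1)=1\}$. (Each $\theta_r$ is a coalgebra automorphism of $H$.) *)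

theory Defs
  imports Main "HOL-Algebra.Bij" "HOL-Algebra.Coset"
begin

text \<open>Model of H = k_q[x,x^-1,y]: an element is its coefficient function on the
  basis x^n y^m, indexed by (n,m) :: int \<times> nat, with finite support.
  H \<otimes> H is modelled with the tensor basis (x^a y^b) \<otimes> (x^c y^d),
  indexed by ((a,b),(c,d)).\<close>

type_synonym idx = "int \<times> nat"

definition supp :: "('a \<Rightarrow> 'k::zero) \<Rightarrow> 'a set" where
  "supp f = {u. f u \<noteq> 0}"

definition fsupp :: "('a \<Rightarrow> 'k::zero) set" where
  "fsupp = {f. finite (supp f)}"

abbreviation Hc :: "(idx \<Rightarrow> 'k::zero) set" where
  "Hc \<equiv> fsupp"

definition bas :: "'a \<Rightarrow> 'a \<Rightarrow> 'k::{zero,one}" where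
  "bas u = (\<lambda>v. if v = u then 1 else 0)"

text \<open>Product of basis monomials: (x^a y^b)(x^c y^d) = q^(b c) x^(a+c) y^(b+d),
  from y x = q x y (and hence y x^-1 = q^-1 x^-1 y).\<close>
definition mm :: "'k::field \<Rightarrow> idx \<Rightarrow> idx \<Rightarrow> 'k \<times> idx" where
  "mm q u v = (q powi (int (snd u) * fst v), (fst u + fst v, snd u + snd v))"

definition tmul :: "'k::field \<Rightarrow> (idx \<times> idx \<Rightarrow> 'k) \<Rightarrow> (idx \<times> idx \<Rightarrow> 'k) \<Rightarrow> (idx \<times> idx \<Rightarrow> 'k)" where
  "tmul q F G = (\<lambda>z. \<Sum>p\<in>supp F. \<Sum>r\<in>supp G.
      (if (snd (mm q (fst p) (fst r)), snd (mm q (snd p) (snd r))) = z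
       then F p * G r * fst (mm q (fst p) (fst r)) * fst (mm q (snd p) (snd r)) else 0))"

definition tone :: "idx \<times> idx \<Rightarrow> 'k::field" where
  "tone = bas ((0,0),(0,0))"

definition tpow :: "'k::field \<Rightarrow> (idx \<times> idx \<Rightarrow> 'k) \<Rightarrow> nat \<Rightarrow> (idx \<times> idx \<Rightarrow> 'k)" where
  "tpow q F n = (tmul q F ^^ n) tone"

text \<open>\<Delta>(x) = x \<otimes> x, \<Delta>(x^-1) = x^-1 \<otimes> x^-1, \<Delta>(y) = y \<otimes> x + 1 \<otimes> y.\<close>
definition Dx :: "idx \<times> idx \<Rightarrow> 'k::field" where "Dx = bas ((1,0),(1,0))"
definition Dxi :: "idx \<times> idx \<Rightarrow> 'k::field" where "Dxi = bas ((-1,0),(-1,0))"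
definition Dy :: "idx \<times> idx \<Rightarrow> 'k::field" where "Dy = (\<lambda>w. bas ((0,1),(1,0)) w + bas ((0,0),(0,1)) w)"

text \<open>\<Delta> is an algebra map, so \<Delta>(x^n y^m) = \<Delta>(x)^n \<Delta>(y)^m (with \<Delta>(x^-1) for n < 0).\<close>
definition Delta_bas :: "'k::field \<Rightarrow> idx \<Rightarrow> (idx \<times> idx \<Rightarrow> 'k)" where
  "Delta_bas q u = tmul q (if fst u \<ge> 0 then tpow q Dx (nat (fst u)) else tpow q Dxi (nat (- fst u)))
                          (tpow q Dy (snd u))"

definition Delta :: "'k::field \<Rightarrow> (idx \<Rightarrow> 'k) \<Rightarrow> (idx \<times> idx \<Rightarrow> 'k)" where
  "Delta q f = (\<lambda>z. \<Sum>u\<in>supp f. f u * Delta_bas q u z)"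

text \<open>\<epsilon> is an algebra map with \<epsilon>(x)=1, \<epsilon>(y)=0, so \<epsilon>(x^n y^m) = 1 if m = 0, else 0.\<close>
definition eps :: "(idx \<Rightarrow> 'k::field) \<Rightarrow> 'k" where
  "eps f = (\<Sum>u\<in>supp f. f u * (if snd u = 0 then 1 else 0))"

definition tensmap :: "((idx \<Rightarrow> 'k) \<Rightarrow> (idx \<Rightarrow> 'k)) \<Rightarrow> (idx \<times> idx \<Rightarrow> 'k::field) \<Rightarrow> (idx \<times> idx \<Rightarrow> 'k)" where
  "tensmap \<phi> F = (\<lambda>w. \<Sum>p\<in>supp F. F p * \<phi> (bas (fst p)) (fst w) * \<phi> (bas (snd p)) (snd w))"

definition klinear :: "((idx \<Rightarrow> 'k::field) \<Rightarrow> (idx \<Rightarrow> 'k)) \<Rightarrow> bool" where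
  "klinear \<phi> \<longleftrightarrow> (\<forall>f\<in>Hc. \<forall>g\<in>Hc. \<phi> (\<lambda>u. f u + g u) = (\<lambda>u. \<phi> f u + \<phi> g u)) \<and>
                   (\<forall>c. \<forall>f\<in>Hc. \<phi> (\<lambda>u. c * f u) = (\<lambda>u. c * \<phi> f u))"

definition Autc :: "'k::field \<Rightarrow> ((idx \<Rightarrow> 'k) \<Rightarrow> (idx \<Rightarrow> 'k)) set" where
  "Autc q = {\<phi> \<in> Bij Hc. klinear \<phi> \<and>
      (\<forall>f\<in>Hc. Delta q (\<phi> f) = tensmap \<phi> (Delta q f) \<and> eps (\<phi> f) = eps f)}"

definition AutcG :: "'k::field \<Rightarrow> ((idx \<Rightarrow> 'k) \<Rightarrow> (idx \<Rightarrow> 'k)) monoid" where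
  "AutcG q = (BijGroup Hc) \<lparr>carrier := Autc q\<rparr>"

definition Aut0 :: "'k::field \<Rightarrow> ((idx \<Rightarrow> 'k) \<Rightarrow> (idx \<Rightarrow> 'k)) set" where
  "Aut0 q = {\<phi> \<in> Autc q. \<phi> (bas (0,0)) = bas (0,0)}"

definition theta :: "int \<Rightarrow> (idx \<Rightarrow> 'k::field) \<Rightarrow> (idx \<Rightarrow> 'k)" where
  "theta r = restrict (\<lambda>f u. f (fst u - r, snd u)) Hc"

definition Theta :: "((idx \<Rightarrow> 'k::field) \<Rightarrow> (idx \<Rightarrow> 'k)) set" where
  "Theta = range theta"

end

theory Submission
  imports Defs "HOL-Algebra.Elementary_Groups"
begin

text \<open>Group-like elements of \<open>H\<close> are exactly the powers \<open>x\<^sup>r\<close>, so a coalgebra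
  automorphism \<open>\<phi>\<close> permutes them. Since \<open>q\<close> is not a root of unity, the Gaussian binomials
  \<open>[m choose 1]\<^sub>q\<close> do not vanish, and comparing coefficients of \<open>\<Delta>\<close> shows that an
  \<open>(x\<^sup>r, x\<^sup>t)\<close>-skew-primitive element is a multiple of \<open>x\<^sup>r - x\<^sup>t\<close> unless
  \<open>t = r + 1\<close>. Applying \<open>\<phi>\<close> to the \<open>(x\<^sup>s, x\<^sup>s\<^sup>+\<^sup>1)\<close>-skew-primitive \<open>x\<^sup>s y\<close>,
  injectivity rules out the first case, so \<open>\<phi>(x\<^sup>s\<^sup>+\<^sup>1) = x \<phi>(x\<^sup>s)\<close> and hence
  \<open>\<phi>(x\<^sup>s) = x\<^sup>s\<^sup>+\<^sup>d\<close> where \<open>\<phi>(1) = x\<^sup>d\<close>. Thus \<open>\<phi> \<mapsto> d\<close> is a homomorphism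
  \<open>Aut\<^sub>c(H) \<rightarrow> \<int>\<close> with kernel \<open>Aut\<^sub>0(H)\<close> and section \<open>r \<mapsto> \<theta>\<^sub>r\<close>.\<close>

lemma bas_apply: "bas u v = (if v = u then 1 else 0)"
  by (simp add: bas_def)

lemma supp_bas [simp]: "supp (bas u :: _ \<Rightarrow> 'k::zero_neq_one) = {u}"
  by (auto simp: supp_def bas_def)

lemma bas_in_fsupp [simp]: "(bas u :: _ \<Rightarrow> 'k::zero_neq_one) \<in> fsupp"
  by (simp add: fsupp_def)

lemma bas_inject: "(bas u :: _ \<Rightarrow> 'k::zero_neq_one) = bas v \<longleftrightarrow> u = v"
  by (metis bas_def zero_neq_one)

lemma fsupp_subset: "finite A \<Longrightarrow> supp f \<subseteq> A \<Longrightarrow> f \<in> fsupp"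
  by (auto simp: fsupp_def intro: finite_subset)

lemma fsupp_add: "(f :: 'a \<Rightarrow> 'k::monoid_add) \<in> fsupp \<Longrightarrow> g \<in> fsupp \<Longrightarrow> (\<lambda>u. f u + g u) \<in> fsupp"
  by (rule fsupp_subset[of "supp f \<union> supp g"]) (auto simp: fsupp_def supp_def)

lemma fsupp_smult: "(f :: 'a \<Rightarrow> 'k::mult_zero) \<in> fsupp \<Longrightarrow> (\<lambda>u. c * f u) \<in> fsupp"
  by (rule fsupp_subset[of "supp f"]) (auto simp: fsupp_def supp_def)

lemma fsupp_lincomb_bas: "finite A \<Longrightarrow> (\<lambda>v. \<Sum>u\<in>A. c u * (bas u v :: 'k::semiring_1)) \<in> fsupp"
  by (rule fsupp_subset[of A]) (auto simp: supp_def bas_apply if_distrib cong: if_cong)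

lemma sum_supp_delta:
  fixes f :: "'a \<Rightarrow> 'k::comm_monoid_add"
  assumes "f \<in> fsupp"
  shows "(\<Sum>u\<in>supp f. if u = u0 then f u else 0) = f u0"
  using assms by (auto simp: sum.delta' fsupp_def supp_def)

lemma fsupp_eq_lincomb_bas:
  fixes g :: "idx \<Rightarrow> 'k::semiring_1"
  assumes "finite A" "supp g \<subseteq> A"
  shows "g = (\<lambda>v. \<Sum>u\<in>A. g u * bas u v)"
proof
  fix v
  have "(\<Sum>u\<in>A. g u * bas u v) = (\<Sum>u\<in>A. if u = v then g v else 0)"
    by (rule sum.cong) (auto simp: bas_def)
  also have "\<dots> = g v"
    using assms by (auto simp: supp_def)
  finally show "g v = (\<Sum>u\<in>A. g u * bas u v)" by simp
qed

section \<open>Gaussian binomial coefficients\<close>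

fun qbinom :: "'k::comm_semiring_1 \<Rightarrow> nat \<Rightarrow> nat \<Rightarrow> 'k" where
  "qbinom q 0 i = (if i = 0 then 1 else 0)"
| "qbinom q (Suc m) i = (if i = 0 then 0 else qbinom q m (i - 1)) + q ^ i * qbinom q m i"

lemma qbinom_eq_0: "m < i \<Longrightarrow> qbinom q m i = 0"
  by (induction m arbitrary: i) auto

lemma qbinom_diag [simp]: "qbinom q m m = 1"
  by (induction m) (auto simp: qbinom_eq_0)

lemma qbinom_0_right [simp]: "qbinom q m 0 = 1"
  by (induction m) auto

lemma qbinom_1_right: "qbinom q m 1 = (\<Sum>j<m. q ^ j)"
  by (induction m) (simp_all add: sum_distrib_left sum.lessThan_Suc_shift del: sum.lessThan_Suc)

lemma qbinom_1_right_neq_0: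
  fixes q :: "'k::comm_ring_1"
  assumes "\<forall>n::nat. n > 0 \<longrightarrow> q ^ n \<noteq> 1" "m > 0"
  shows "qbinom q m 1 \<noteq> 0"
proof
  assume "qbinom q m 1 = 0"
  then have "1 - q ^ m = 0"
    by (simp only: qbinom_1_right one_diff_power_eq) simp
  with assms show False by auto
qed

section \<open>The coproduct on monomials\<close>

lemma tmul_eq_sum_superset:
  assumes "finite S" "supp F \<subseteq> S" "finite T" "supp G \<subseteq> T"
  shows "tmul q F G z = (\<Sum>p\<in>S. \<Sum>r\<in>T.
      (if (snd (mm q (fst p) (fst r)), snd (mm q (snd p) (snd r))) = z
       then F p * G r * fst (mm q (fst p) (fst r)) * fst (mm q (snd p) (snd r)) else 0))"
proof -
  let ?h = "\<lambda>p r. (if (snd (mm q (fst p) (fst r)), snd (mm q (snd p) (snd r))) = z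
       then F p * G r * fst (mm q (fst p) (fst r)) * fst (mm q (snd p) (snd r)) else 0)"
  have "(\<Sum>r\<in>supp G. ?h p r) = (\<Sum>r\<in>T. ?h p r)" for p
    by (rule sum.mono_neutral_left[OF assms(3,4)]) (auto simp: supp_def)
  moreover have "(\<Sum>p\<in>supp F. \<Sum>r\<in>T. ?h p r) = (\<Sum>p\<in>S. \<Sum>r\<in>T. ?h p r)"
  proof (rule sum.mono_neutral_left[OF assms(1,2)], rule ballI)
    fix p assume "p \<in> S - supp F"
    then have "F p = 0" by (simp add: supp_def)
    then show "(\<Sum>r\<in>T. ?h p r) = 0" by (intro sum.neutral) simp
  qed
  ultimately show ?thesis
    by (simp add: tmul_def)
qed

lemma tmul_bas:
  "tmul q (bas p) (bas r) z = (if (snd (mm q (fst p) (fst r)), snd (mm q (snd p) (snd r))) = z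
       then fst (mm q (fst p) (fst r)) * fst (mm q (snd p) (snd r)) else 0)"
  by (subst tmul_eq_sum_superset[of "{p}" _ "{r}"]) (simp_all add: bas_apply)

lemma tpow_Dx: "tpow q Dx k = bas ((int k, 0), (int k, 0))"
proof (induction k)
  case (Suc k)
  then have "tpow q Dx (Suc k) = tmul q Dx (bas ((int k, 0), (int k, 0)))"
    by (simp add: tpow_def)
  also have "\<dots> = bas ((int (Suc k), 0), (int (Suc k), 0))"
    by (auto simp: Dx_def tmul_bas mm_def bas_apply fun_eq_iff)
  finally show ?case .
qed (simp add: tpow_def tone_def)

lemma tpow_Dxi: "tpow q Dxi k = bas ((- int k, 0), (- int k, 0))"
proof (induction k)
  case (Suc k)
  then have "tpow q Dxi (Suc k) = tmul q Dxi (bas ((- int k, 0), (- int k, 0)))"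
    by (simp add: tpow_def)
  also have "\<dots> = bas ((- int (Suc k), 0), (- int (Suc k), 0))"
    by (auto simp: Dxi_def tmul_bas mm_def bas_apply fun_eq_iff)
  finally show ?case .
qed (simp add: tpow_def tone_def)

text \<open>The coefficients of
  \<open>\<Delta>(x\<^sup>n y\<^sup>m) = \<Sum>\<^sub>i [m choose i]\<^sub>q x\<^sup>n y\<^sup>i \<otimes> x\<^sup>n\<^sup>+\<^sup>i y\<^sup>m\<^sup>-\<^sup>i\<close>.\<close>
definition Delta_monomial :: "'k::field \<Rightarrow> int \<Rightarrow> nat \<Rightarrow> idx \<times> idx \<Rightarrow> 'k" where
  "Delta_monomial q n m z =
     (if fst (fst z) = n \<and> fst (snd z) = n + int (snd (fst z)) \<and> snd (fst z) + snd (snd z) = m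
      then qbinom q m (snd (fst z)) else 0)"

lemma supp_Delta_monomial:
  "supp (Delta_monomial q n m) \<subseteq> (\<lambda>i. ((n, i), (n + int i, m - i))) ` {..m}"
  by (auto simp: supp_def Delta_monomial_def image_iff)

lemma sum_Delta_monomial_support:
  "(\<Sum>r\<in>(\<lambda>i. ((n, i), (n + int i, m - i))) ` {..m}. h r) = (\<Sum>i\<le>m. h ((n, i), (n + int i, m - i)))"
  by (subst sum.reindex) (auto simp: inj_on_def)

lemma tmul_Dy_Delta_monomial: "tmul q Dy (Delta_monomial q 0 m) = Delta_monomial q 0 (Suc m)"
proof
  fix z :: "idx \<times> idx"
  obtain a b c d where z: "z = ((a, b), (c, d))" by (metis prod.collapse)
  have supp_Dy: "supp (Dy :: _ \<Rightarrow> 'a) \<subseteq> {((0, 1), (1, 0)), ((0, 0), (0, 1))}"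
    by (auto simp: supp_def Dy_def bas_apply)
  have "tmul q Dy (Delta_monomial q 0 m) z =
      (\<Sum>i\<le>m. if a = 0 \<and> b = Suc i \<and> c = 1 + int i \<and> d = m - i then qbinom q m i else 0)
    + (\<Sum>i\<le>m. if a = 0 \<and> b = i \<and> c = int i \<and> d = Suc m - i then q ^ i * qbinom q m i else 0)"
    unfolding z
    by (subst tmul_eq_sum_superset[OF _ supp_Dy _ supp_Delta_monomial])
      (auto simp: sum_Delta_monomial_support[where n = 0, simplified] mm_def Dy_def bas_apply
        Delta_monomial_def mult.commute intro!: arg_cong2[where f = "(+)"] sum.cong)
  also have "\<dots> = Delta_monomial q 0 (Suc m) z"
  proof (cases "a = 0 \<and> c = int b \<and> b + d = Suc m")
    case True
    have "(\<Sum>i\<le>m. if a = 0 \<and> b = Suc i \<and> c = 1 + int i \<and> d = m - i then qbinom q m i else 0)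
        = (\<Sum>i\<le>m. if i = b - 1 then (if b = 0 then 0 else qbinom q m i) else 0)"
      by (rule sum.cong) (use True in auto)
    moreover have "(\<Sum>i\<le>m. if a = 0 \<and> b = i \<and> c = int i \<and> d = Suc m - i then q ^ i * qbinom q m i else 0)
        = (\<Sum>i\<le>m. if i = b then q ^ i * qbinom q m i else 0)"
      by (rule sum.cong) (use True in auto)
    ultimately show ?thesis
      using True by (auto simp: z Delta_monomial_def qbinom_eq_0)
  next
    case False
    then have "(\<Sum>i\<le>m. if a = 0 \<and> b = Suc i \<and> c = 1 + int i \<and> d = m - i then qbinom q m i else 0) = 0"
      "(\<Sum>i\<le>m. if a = 0 \<and> b = i \<and> c = int i \<and> d = Suc m - i then q ^ i * qbinom q m i else 0) = 0"
      by (auto intro!: sum.neutral)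
    with False show ?thesis
      by (auto simp: z Delta_monomial_def)
  qed
  finally show "tmul q Dy (Delta_monomial q 0 m) z = Delta_monomial q 0 (Suc m) z" .
qed

lemma tpow_Dy: "tpow q Dy m = Delta_monomial q 0 m"
proof (induction m)
  case 0
  show ?case by (auto simp: tpow_def tone_def Delta_monomial_def bas_apply fun_eq_iff)
next
  case (Suc m)
  then show ?case
    by (simp add: tpow_def tmul_Dy_Delta_monomial)
qed

lemma Delta_bas_eq: "Delta_bas q (n, m) = Delta_monomial q n m"
proof
  fix z :: "idx \<times> idx"
  obtain a b c d where z: "z = ((a, b), (c, d))" by (metis prod.collapse)
  have Dx_power: "(if n \<ge> 0 then tpow q Dx (nat n) else tpow q Dxi (nat (- n))) = bas ((n, 0), (n, 0))"
    by (simp add: tpow_Dx tpow_Dxi)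
  have "Delta_bas q (n, m) z =
      (\<Sum>i\<le>m. if a = n \<and> i = b \<and> c = n + int i \<and> d = m - i then qbinom q m i else 0)"
    unfolding Delta_bas_def fst_conv snd_conv Dx_power tpow_Dy z
    by (subst tmul_eq_sum_superset[OF _ _ _ supp_Delta_monomial[where n = 0, simplified],
          where S = "{((n, 0), (n, 0))}"])
      (auto simp: sum_Delta_monomial_support[where n = 0, simplified] bas_apply mm_def Delta_monomial_def
        intro!: sum.cong)
  also have "\<dots> = (\<Sum>i\<le>m. if i = b then (if a = n \<and> c = n + int b \<and> d = m - b then qbinom q m b else 0) else 0)"
    by (rule sum.cong) auto
  also have "\<dots> = Delta_monomial q n m z"
    by (auto simp: z Delta_monomial_def)
  finally show "Delta_bas q (n, m) z = Delta_monomial q n m z" .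
qed

lemma Delta_apply:
  assumes "f \<in> fsupp"
  shows "Delta q f ((a, b), (c, d)) = (if c = a + int b then f (a, b + d) * qbinom q (b + d) b else 0)"
proof -
  have "Delta q f ((a, b), (c, d)) =
      (\<Sum>u\<in>supp f. if u = (a, b + d) then (if c = a + int b then f u * qbinom q (b + d) b else 0) else 0)"
    unfolding Delta_def
    by (rule sum.cong) (auto simp: Delta_bas_eq[of q "fst u" "snd u" for u, simplified] Delta_monomial_def)
  also have "\<dots> = (if c = a + int b then f (a, b + d) * qbinom q (b + d) b else 0)"
    using assms by (auto simp: fsupp_def supp_def)
  finally show ?thesis .
qed

lemma Delta_fsupp:
  assumes "f \<in> fsupp"
  shows "Delta q f \<in> fsupp"
proof (rule fsupp_subset)
  show "finite (\<Union>u\<in>supp f. (\<lambda>b. ((fst u, b), (fst u + int b, snd u - b))) ` {..snd u})"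
    using assms by (simp add: fsupp_def)
  show "supp (Delta q f) \<subseteq> (\<Union>u\<in>supp f. (\<lambda>b. ((fst u, b), (fst u + int b, snd u - b))) ` {..snd u})"
  proof
    fix z assume z_supp: "z \<in> supp (Delta q f)"
    obtain a b c d where z: "z = ((a, b), (c, d))" by (metis prod.collapse)
    from z_supp have "c = a + int b" "f (a, b + d) \<noteq> 0"
      by (auto simp: supp_def z Delta_apply[OF assms] split: if_splits)
    then show "z \<in> (\<Union>u\<in>supp f. (\<lambda>b. ((fst u, b), (fst u + int b, snd u - b))) ` {..snd u})"
      by (auto simp: z supp_def image_iff intro!: bexI[of _ "(a, b + d)"])
  qed
qed

lemma klinear_add: "klinear \<phi> \<Longrightarrow> f \<in> Hc \<Longrightarrow> g \<in> Hc \<Longrightarrow> \<phi> (\<lambda>u. f u + g u) = (\<lambda>u. \<phi> f u + \<phi> g u)"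
  by (simp add: klinear_def)

lemma klinear_smult: "klinear \<phi> \<Longrightarrow> f \<in> Hc \<Longrightarrow> \<phi> (\<lambda>u. c * f u) = (\<lambda>u. c * \<phi> f u)"
  by (simp add: klinear_def)

lemma klinear_zero: "klinear \<phi> \<Longrightarrow> \<phi> (\<lambda>u. 0) = (\<lambda>u. 0)"
  using klinear_smult[of \<phi> "\<lambda>u. 0" 0] by (simp add: fsupp_def supp_def)

lemma klinear_smult_diff:
  assumes "klinear \<phi>" "f \<in> Hc" "g \<in> Hc"
  shows "\<phi> (\<lambda>u. l * (f u - g u)) = (\<lambda>u. l * (\<phi> f u - \<phi> g u))"
proof -
  have "\<phi> (\<lambda>u. l * (f u - g u)) = \<phi> (\<lambda>u. (\<lambda>u. l * f u) u + (\<lambda>u. (- l) * g u) u)"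
    by (simp add: algebra_simps)
  also have "\<dots> = (\<lambda>u. \<phi> (\<lambda>u. l * f u) u + \<phi> (\<lambda>u. (- l) * g u) u)"
    using assms by (intro klinear_add fsupp_smult)
  also have "\<dots> = (\<lambda>u. l * (\<phi> f u - \<phi> g u))"
    unfolding klinear_smult[OF assms(1,2)] klinear_smult[OF assms(1,3)] by (simp add: algebra_simps)
  finally show ?thesis .
qed

lemma klinear_lincomb_bas:
  assumes "klinear \<phi>" "finite A"
  shows "\<phi> (\<lambda>v. \<Sum>u\<in>A. c u * bas u v) = (\<lambda>v. \<Sum>u\<in>A. c u * \<phi> (bas u) v)"
  using assms(2)
proof (induction A rule: finite_induct)
  case empty
  then show ?case using klinear_zero[OF assms(1)] by simp
next
  case (insert x A)
  then have "\<phi> (\<lambda>v. \<Sum>u\<in>insert x A. c u * bas u v) = \<phi> (\<lambda>v. c x * bas x v + (\<Sum>u\<in>A. c u * bas u v))"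
    by simp
  also have "\<dots> = (\<lambda>v. \<phi> (\<lambda>v. c x * bas x v) v + \<phi> (\<lambda>v. \<Sum>u\<in>A. c u * bas u v) v)"
    using assms(1) insert(1) by (intro klinear_add fsupp_smult fsupp_lincomb_bas bas_in_fsupp)
  also have "\<phi> (\<lambda>v. c x * bas x v) = (\<lambda>v. c x * \<phi> (bas x) v)"
    using assms(1) by (simp add: klinear_smult)
  finally show ?case
    using insert by simp
qed

lemma klinear_apply_expansion:
  assumes "klinear \<phi>" "finite A" "supp g \<subseteq> A"
  shows "\<phi> g v = (\<Sum>u\<in>A. g u * \<phi> (bas u) v)"
  by (subst fsupp_eq_lincomb_bas[OF assms(2,3)]) (simp add: klinear_lincomb_bas[OF assms(1,2)])

lemma klinear_compose:
  assumes "klinear \<phi>" "klinear \<psi>" "\<And>f. f \<in> Hc \<Longrightarrow> \<psi> f \<in> Hc"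
  shows "klinear (compose Hc \<phi> \<psi>)"
  using assms by (simp add: klinear_def compose_def fsupp_add fsupp_smult)

lemma klinear_inv_into:
  assumes bij: "bij_betw \<phi> Hc Hc" and lin: "klinear \<phi>"
  shows "klinear (\<lambda>x\<in>Hc. inv_into Hc \<phi> x)"
proof -
  have inv_Hc: "inv_into Hc \<phi> f \<in> Hc" if "f \<in> Hc" for f
    using that bij by (simp add: bij_betw_def inv_into_into)
  have \<phi>_inv: "\<phi> (inv_into Hc \<phi> f) = f" if "f \<in> Hc" for f
    using that bij by (simp add: bij_betw_def f_inv_into_f)
  have inv_eqI: "inv_into Hc \<phi> g = f" if "f \<in> Hc" "\<phi> f = g" for f g
    using that bij by (auto simp: bij_betw_def inv_into_f_f)
  show ?thesis
    unfolding klinear_def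
  proof (intro conjI ballI allI)
    fix f g :: "idx \<Rightarrow> 'a" assume "f \<in> Hc" "g \<in> Hc"
    then show "(\<lambda>x\<in>Hc. inv_into Hc \<phi> x) (\<lambda>u. f u + g u)
        = (\<lambda>u. (\<lambda>x\<in>Hc. inv_into Hc \<phi> x) f u + (\<lambda>x\<in>Hc. inv_into Hc \<phi> x) g u)"
      by (simp add: fsupp_add, intro inv_eqI) (simp_all add: fsupp_add inv_Hc \<phi>_inv klinear_add[OF lin])
  next
    fix c :: 'a and f :: "idx \<Rightarrow> 'a" assume "f \<in> Hc"
    then show "(\<lambda>x\<in>Hc. inv_into Hc \<phi> x) (\<lambda>u. c * f u) = (\<lambda>u. c * (\<lambda>x\<in>Hc. inv_into Hc \<phi> x) f u)"
      by (simp add: fsupp_smult, intro inv_eqI) (simp_all add: fsupp_smult inv_Hc \<phi>_inv klinear_smult[OF lin])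
  qed
qed

lemma tensmap_eq_sum_superset:
  assumes "finite S" "supp F \<subseteq> S"
  shows "tensmap \<phi> F w = (\<Sum>p\<in>S. F p * \<phi> (bas (fst p)) (fst w) * \<phi> (bas (snd p)) (snd w))"
  unfolding tensmap_def by (rule sum.mono_neutral_left[OF assms]) (auto simp: supp_def)

lemma tensmap_bas: "tensmap \<phi> (bas p) w = \<phi> (bas (fst p)) (fst w) * \<phi> (bas (snd p)) (snd w)"
  by (subst tensmap_eq_sum_superset[of "{p}"]) (simp_all add: bas_apply)

lemma tensmap_cong: "(\<And>u. \<phi> (bas u) = \<psi> (bas u)) \<Longrightarrow> tensmap \<phi> F = tensmap \<psi> F"
  by (simp add: tensmap_def)

lemma tensmap_id:
  assumes "F \<in> fsupp"
  shows "tensmap (\<lambda>f. f) F = F"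
proof
  fix w :: "idx \<times> idx"
  have "tensmap (\<lambda>f. f) F w = (\<Sum>p\<in>supp F. if p = w then F p else 0)"
    unfolding tensmap_def by (rule sum.cong) (auto simp: bas_def prod_eq_iff)
  then show "tensmap (\<lambda>f. f) F w = F w"
    using sum_supp_delta[OF assms] by simp
qed

lemma supp_tensmap_subset:
  "supp (tensmap \<phi> F) \<subseteq> (\<Union>p\<in>supp F. supp (\<phi> (bas (fst p)))) \<times> (\<Union>p\<in>supp F. supp (\<phi> (bas (snd p))))"
proof
  fix w assume "w \<in> supp (tensmap \<phi> F)"
  then have "(\<Sum>p\<in>supp F. F p * \<phi> (bas (fst p)) (fst w) * \<phi> (bas (snd p)) (snd w)) \<noteq> 0"
    by (simp add: supp_def tensmap_def)
  then obtain p where "p \<in> supp F" "F p * \<phi> (bas (fst p)) (fst w) * \<phi> (bas (snd p)) (snd w) \<noteq> 0"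
    by (meson sum.neutral)
  then have "p \<in> supp F" "fst w \<in> supp (\<phi> (bas (fst p)))" "snd w \<in> supp (\<phi> (bas (snd p)))"
    by (auto simp: supp_def)
  then show "w \<in> (\<Union>p\<in>supp F. supp (\<phi> (bas (fst p)))) \<times> (\<Union>p\<in>supp F. supp (\<phi> (bas (snd p))))"
    by (cases w) auto
qed

lemma tensmap_tensmap:
  assumes "klinear \<phi>" "\<And>u. \<psi> (bas u) \<in> fsupp" "F \<in> fsupp"
  shows "tensmap \<phi> (tensmap \<psi> F) = tensmap (\<lambda>f. \<phi> (\<psi> f)) F"
proof
  fix w :: "idx \<times> idx"
  let ?A = "\<Union>p\<in>supp F. supp (\<psi> (bas (fst p)))" and ?B = "\<Union>p\<in>supp F. supp (\<psi> (bas (snd p)))"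
  have fin: "finite ?A" "finite ?B"
    using assms(2,3) by (auto simp: fsupp_def)
  have "tensmap \<phi> (tensmap \<psi> F) w =
      (\<Sum>p'\<in>?A \<times> ?B. tensmap \<psi> F p' * \<phi> (bas (fst p')) (fst w) * \<phi> (bas (snd p')) (snd w))"
    using fin by (intro tensmap_eq_sum_superset supp_tensmap_subset) simp
  also have "\<dots> = (\<Sum>p\<in>supp F. \<Sum>p'\<in>?A \<times> ?B. F p * (\<psi> (bas (fst p)) (fst p') * \<phi> (bas (fst p')) (fst w))
      * (\<psi> (bas (snd p)) (snd p') * \<phi> (bas (snd p')) (snd w)))"
    unfolding tensmap_def sum_distrib_right sum_distrib_left
    by (subst sum.swap) (simp add: mult_ac)
  also have "\<dots> = (\<Sum>p\<in>supp F. F p * (\<Sum>u\<in>?A. \<psi> (bas (fst p)) u * \<phi> (bas u) (fst w))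
      * (\<Sum>v\<in>?B. \<psi> (bas (snd p)) v * \<phi> (bas v) (snd w)))"
    by (rule sum.cong[OF refl]) (simp add: sum.cartesian_product' sum_product sum_distrib_left mult_ac)
  also have "\<dots> = (\<Sum>p\<in>supp F. F p * \<phi> (\<psi> (bas (fst p))) (fst w) * \<phi> (\<psi> (bas (snd p))) (snd w))"
  proof (rule sum.cong[OF refl])
    fix p assume p: "p \<in> supp F"
    have "\<phi> (\<psi> (bas (fst p))) (fst w) = (\<Sum>u\<in>?A. \<psi> (bas (fst p)) u * \<phi> (bas u) (fst w))"
      by (rule klinear_apply_expansion[OF assms(1) fin(1)]) (use p in blast)
    moreover have "\<phi> (\<psi> (bas (snd p))) (snd w) = (\<Sum>v\<in>?B. \<psi> (bas (snd p)) v * \<phi> (bas v) (snd w))"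
      by (rule klinear_apply_expansion[OF assms(1) fin(2)]) (use p in blast)
    ultimately show "F p * (\<Sum>u\<in>?A. \<psi> (bas (fst p)) u * \<phi> (bas u) (fst w))
        * (\<Sum>v\<in>?B. \<psi> (bas (snd p)) v * \<phi> (bas v) (snd w))
      = F p * \<phi> (\<psi> (bas (fst p))) (fst w) * \<phi> (\<psi> (bas (snd p))) (snd w)"
      by simp
  qed
  also have "\<dots> = tensmap (\<lambda>f. \<phi> (\<psi> f)) F w"
    by (simp add: tensmap_def)
  finally show "tensmap \<phi> (tensmap \<psi> F) w = tensmap (\<lambda>f. \<phi> (\<psi> f)) F w" .
qed

lemma AutcD:
  assumes "\<phi> \<in> Autc q"
  shows "\<phi> \<in> Bij Hc" "klinear \<phi>" "\<And>f. f \<in> Hc \<Longrightarrow> Delta q (\<phi> f) = tensmap \<phi> (Delta q f)"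
    "\<And>f. f \<in> Hc \<Longrightarrow> eps (\<phi> f) = eps f"
  using assms unfolding Autc_def by blast+

lemma Autc_bij_betw: "\<phi> \<in> Autc q \<Longrightarrow> bij_betw \<phi> Hc Hc"
  using AutcD(1) unfolding Bij_def by blast

lemma Autc_fsupp: "\<phi> \<in> Autc q \<Longrightarrow> f \<in> Hc \<Longrightarrow> \<phi> f \<in> Hc"
  using Autc_bij_betw bij_betwE by blast

lemma id_in_Autc: "(\<lambda>x\<in>Hc. x) \<in> Autc q"
proof -
  have "Delta q f = tensmap (\<lambda>x\<in>Hc. x) (Delta q f)" if "f \<in> Hc" for f :: "idx \<Rightarrow> 'a"
    using tensmap_id[OF Delta_fsupp[OF that]] by (simp add: tensmap_cong[of "\<lambda>x\<in>Hc. x" "\<lambda>x. x"])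
  then show ?thesis
    by (auto simp: Autc_def id_Bij klinear_def fsupp_add fsupp_smult)
qed

lemma compose_in_Autc:
  assumes \<phi>: "\<phi> \<in> Autc q" and \<psi>: "\<psi> \<in> Autc q"
  shows "compose Hc \<phi> \<psi> \<in> Autc q"
proof -
  have "compose Hc \<phi> \<psi> \<in> Bij Hc"
    by (rule compose_Bij[OF AutcD(1)[OF \<phi>] AutcD(1)[OF \<psi>]])
  moreover have "klinear (compose Hc \<phi> \<psi>)"
    by (rule klinear_compose[OF AutcD(2)[OF \<phi>] AutcD(2)[OF \<psi>] Autc_fsupp[OF \<psi>]])
  moreover have "Delta q (compose Hc \<phi> \<psi> f) = tensmap (compose Hc \<phi> \<psi>) (Delta q f)" if f: "f \<in> Hc" for f
  proof -
    have "Delta q (compose Hc \<phi> \<psi> f) = tensmap \<phi> (tensmap \<psi> (Delta q f))"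
      using f by (simp add: compose_def AutcD(3)[OF \<phi>] AutcD(3)[OF \<psi>] Autc_fsupp[OF \<psi>])
    also have "\<dots> = tensmap (\<lambda>f. \<phi> (\<psi> f)) (Delta q f)"
      by (rule tensmap_tensmap[where \<psi> = \<psi>, OF AutcD(2)[OF \<phi>] Autc_fsupp[OF \<psi> bas_in_fsupp] Delta_fsupp[where q = q, OF f]])
    also have "\<dots> = tensmap (compose Hc \<phi> \<psi>) (Delta q f)"
      by (rule tensmap_cong) (simp add: compose_def)
    finally show ?thesis .
  qed
  moreover have "eps (compose Hc \<phi> \<psi> f) = eps f" if "f \<in> Hc" for f
    using that by (simp add: compose_def AutcD(4)[OF \<phi>] AutcD(4)[OF \<psi>] Autc_fsupp[OF \<psi>])
  ultimately show ?thesis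
    by (simp add: Autc_def)
qed

lemma inv_into_in_Autc:
  assumes \<phi>: "\<phi> \<in> Autc q"
  shows "(\<lambda>x\<in>Hc. inv_into Hc \<phi> x) \<in> Autc q"
proof -
  let ?\<psi> = "\<lambda>x\<in>Hc. inv_into Hc \<phi> x"
  have bij: "bij_betw \<phi> Hc Hc"
    by (rule Autc_bij_betw[OF \<phi>])
  have lin: "klinear ?\<psi>"
    by (rule klinear_inv_into[OF bij AutcD(2)[OF \<phi>]])
  have \<psi>_Hc: "?\<psi> f \<in> Hc" and \<phi>_\<psi>: "\<phi> (?\<psi> f) = f" if "f \<in> Hc" for f
    using that bij by (simp_all add: bij_betw_def inv_into_into f_inv_into_f)
  have \<psi>_\<phi>: "?\<psi> (\<phi> f) = f" if "f \<in> Hc" for f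
    using that bij Autc_fsupp[OF \<phi>] by (simp add: bij_betw_def inv_into_f_f)
  have "Delta q (?\<psi> f) = tensmap ?\<psi> (Delta q f)" if f: "f \<in> Hc" for f
  proof -
    have "Delta q (?\<psi> f) = tensmap (\<lambda>h. h) (Delta q (?\<psi> f))"
      by (rule tensmap_id[symmetric, OF Delta_fsupp[OF \<psi>_Hc[OF f]]])
    also have "\<dots> = tensmap (\<lambda>h. ?\<psi> (\<phi> h)) (Delta q (?\<psi> f))"
      by (rule tensmap_cong) (simp only: \<psi>_\<phi>[OF bas_in_fsupp])
    also have "\<dots> = tensmap ?\<psi> (tensmap \<phi> (Delta q (?\<psi> f)))"
      using f by (intro tensmap_tensmap[symmetric] lin Autc_fsupp[OF \<phi>] Delta_fsupp \<psi>_Hc bas_in_fsupp)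
    also have "tensmap \<phi> (Delta q (?\<psi> f)) = Delta q f"
      using AutcD(3)[OF \<phi> \<psi>_Hc[OF f]] \<phi>_\<psi>[OF f] by simp
    finally show ?thesis .
  qed
  moreover have "eps (?\<psi> f) = eps f" if "f \<in> Hc" for f
    using AutcD(4)[OF \<phi> \<psi>_Hc[OF that]] \<phi>_\<psi>[OF that] by simp
  ultimately show ?thesis
    using lin restrict_inv_into_Bij[OF AutcD(1)[OF \<phi>]] by (simp add: Autc_def)
qed

lemma subgroup_Autc: "subgroup (Autc q) (BijGroup (Hc :: (idx \<Rightarrow> 'k::field) set))"
proof (rule group.subgroupI[OF group_BijGroup])
  show "Autc q \<subseteq> carrier (BijGroup Hc)"
    by (auto simp: BijGroup_def Autc_def)
  show "Autc q \<noteq> {}"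
    using id_in_Autc by blast
next
  fix \<phi> assume \<phi>: "\<phi> \<in> Autc q"
  then have "inv\<^bsub>BijGroup Hc\<^esub> \<phi> = (\<lambda>x\<in>Hc. inv_into Hc \<phi> x)"
    by (intro inv_BijGroup AutcD(1))
  then show "inv\<^bsub>BijGroup Hc\<^esub> \<phi> \<in> Autc q"
    using inv_into_in_Autc[OF \<phi>] by simp
next
  fix \<phi> \<psi> assume "\<phi> \<in> Autc q" "\<psi> \<in> Autc q"
  then show "\<phi> \<otimes>\<^bsub>BijGroup Hc\<^esub> \<psi> \<in> Autc q"
    by (simp add: BijGroup_def AutcD(1) compose_in_Autc)
qed

lemma group_AutcG: "group (AutcG q)"
  unfolding AutcG_def by (rule subgroup.subgroup_is_group[OF subgroup_Autc group_BijGroup])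

lemma carrier_AutcG [simp]: "carrier (AutcG q) = Autc q"
  by (simp add: AutcG_def)

lemma one_AutcG: "\<one>\<^bsub>AutcG q\<^esub> = (\<lambda>x\<in>Hc. x)"
  by (simp add: AutcG_def BijGroup_def)

lemma mult_AutcG: "\<phi> \<in> Autc q \<Longrightarrow> \<psi> \<in> Autc q \<Longrightarrow> \<phi> \<otimes>\<^bsub>AutcG q\<^esub> \<psi> = compose Hc \<phi> \<psi>"
  by (simp add: AutcG_def BijGroup_def AutcD(1))

lemma mult_AutcG_apply:
  "\<phi> \<in> Autc q \<Longrightarrow> \<psi> \<in> Autc q \<Longrightarrow> f \<in> Hc \<Longrightarrow> (\<phi> \<otimes>\<^bsub>AutcG q\<^esub> \<psi>) f = \<phi> (\<psi> f)"
  by (simp add: mult_AutcG compose_def)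

section \<open>Group-like and skew-primitive elements\<close>

definition grouplike :: "'k::field \<Rightarrow> (idx \<Rightarrow> 'k) \<Rightarrow> bool" where
  "grouplike q g \<longleftrightarrow> g \<in> Hc \<and> Delta q g = (\<lambda>w. g (fst w) * g (snd w)) \<and> eps g = 1"

definition skew_primitive :: "'k::field \<Rightarrow> int \<Rightarrow> int \<Rightarrow> (idx \<Rightarrow> 'k) \<Rightarrow> bool" where
  "skew_primitive q a c w \<longleftrightarrow> w \<in> Hc \<and>
     Delta q w = (\<lambda>z. w (fst z) * bas (c, 0) (snd z) + bas (a, 0) (fst z) * w (snd z))"

lemma grouplike_imp_bas:
  fixes g :: "idx \<Rightarrow> 'k::field"
  assumes "grouplike q g"
  shows "\<exists>r. g = bas (r, 0)"
proof -
  have g: "g \<in> Hc" and eps: "eps g = 1"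
    using assms by (simp_all add: grouplike_def)
  have coprod: "g (a, b) * g (c, d) = (if c = a + int b then g (a, b + d) * qbinom q (b + d) b else 0)" for a b c d
    using assms Delta_apply[OF g, of q a b c d] by (simp add: grouplike_def)
  have y_free: "b = 0" if "g (a, b) \<noteq> 0" for a b
    using that coprod[of a b a b] by (auto split: if_splits)
  have "supp g \<noteq> {}"
    using eps by (auto simp: eps_def)
  then obtain a b where "g (a, b) \<noteq> 0"
    by (auto simp: supp_def)
  then have ga: "g (a, 0) \<noteq> 0"
    using y_free by blast
  have "g (a, 0) = 1"
    using ga coprod[of a 0 a 0] by simp
  moreover have "g (c, d) = 0" if "(c, d) \<noteq> (a, 0)" for c d
    using that ga coprod[of a 0 c 0] y_free[of c d] by (cases "d = 0") auto
  ultimately have "g = bas (a, 0)"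
    by (auto simp: bas_apply fun_eq_iff)
  then show ?thesis ..
qed

lemma grouplike_bas: "grouplike q (bas (s, 0))"
proof -
  have "Delta q (bas (s, 0)) ((a, b), (c, d)) = bas (s, 0) (a, b) * bas (s, 0) (c, d)" for a b c d
    by (auto simp: Delta_apply bas_apply)
  then show ?thesis
    by (simp add: grouplike_def eps_def bas_apply fun_eq_iff split_paired_all)
qed

lemma skew_primitive_bas: "skew_primitive q s (s + 1) (bas (s, 1))"
proof -
  have "Delta q (bas (s, 1)) ((a, b), (c, d)) =
      bas (s, 1) (a, b) * bas (s + 1, 0) (c, d) + bas (s, 0) (a, b) * bas (s, 1) (c, d)" for a b c d
  proof -
    have "b + d = 1 \<longleftrightarrow> (b = 0 \<and> d = 1) \<or> (b = 1 \<and> d = 0)" by auto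
    then show ?thesis
      by (auto simp: Delta_apply bas_apply)
  qed
  then show ?thesis
    by (simp add: skew_primitive_def fun_eq_iff split_paired_all)
qed

lemma skew_primitive_y_degree:
  fixes w :: "idx \<Rightarrow> 'k::field"
  assumes q: "\<forall>n::nat. n > 0 \<longrightarrow> q ^ n \<noteq> 1"
    and w: "skew_primitive q a c w" and nz: "w (x, m) \<noteq> 0" and "m \<ge> 1"
  shows "c = a + 1"
proof -
  have coprod: "w (x', b) * bas (c, 0) (c', d) + bas (a, 0) (x', b) * w (c', d)
      = (if c' = x' + int b then w (x', b + d) * qbinom q (b + d) b else 0)" for x' b c' d
  proof -
    have "w \<in> Hc" and "Delta q w = (\<lambda>z. w (fst z) * bas (c, 0) (snd z) + bas (a, 0) (fst z) * w (snd z))"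
      using w by (simp_all add: skew_primitive_def)
    then show ?thesis
      using Delta_apply[of w q x' b c' d] by simp
  qed
  have "x + int m = c"
    using coprod[of x m "x + int m" 0] nz \<open>m \<ge> 1\<close> by (auto simp: bas_apply split: if_splits)
  moreover have "x = a"
    using coprod[of x 0 x m] nz \<open>m \<ge> 1\<close> by (auto simp: bas_apply split: if_splits)
  moreover have "m = 1"
  proof (rule ccontr)
    assume "m \<noteq> 1"
    then have "qbinom q m 1 \<noteq> 0"
      using qbinom_1_right_neq_0[OF q] \<open>m \<ge> 1\<close> by simp
    then show False
      using coprod[of x 1 "x + 1" "m - 1"] nz \<open>m \<ge> 1\<close> \<open>m \<noteq> 1\<close> by (auto simp: bas_apply)
  qed
  ultimately show ?thesis
    by simp
qed

lemma skew_primitive_y_free: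
  fixes w :: "idx \<Rightarrow> 'k::field"
  assumes w: "skew_primitive q a c w" and y_free: "\<And>x m. w (x, m) \<noteq> 0 \<Longrightarrow> m = 0"
  shows "\<exists>l. w = (\<lambda>u. l * (bas (a, 0) u - bas (c, 0) u))"
proof -
  have coprod: "w (x, 0) * bas (c, 0) (x', 0::nat) + bas (a, 0) (x, 0::nat) * w (x', 0)
      = (if x' = x then w (x, 0) else 0)" for x x'
  proof -
    have wH: "w \<in> Hc" and Dw: "Delta q w = (\<lambda>z. w (fst z) * bas (c, 0) (snd z) + bas (a, 0) (fst z) * w (snd z))"
      using w by (simp_all add: skew_primitive_def)
    have "Delta q w ((x, 0), (x', 0)) = (if x' = x then w (x, 0) else 0)"
      using wH by (simp add: Delta_apply)
    then show ?thesis
      by (simp add: Dw)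
  qed
  have outside: "w (x, 0) = 0" if "x \<noteq> a \<or> a = c" "x \<noteq> c \<or> a = c" for x
    using that coprod[of x x] by (auto simp: bas_apply split: if_splits)
      (metis add_cancel_right_right one_add_one zero_neq_one)
  have "w (c, 0) = - w (a, 0)" if "a \<noteq> c"
    using that coprod[of a c] by (auto simp: bas_apply eq_neg_iff_add_eq_0 add.commute)
  then have "w = (\<lambda>u. w (a, 0) * (bas (a, 0) u - bas (c, 0) u))"
    using outside y_free by (fastforce simp: bas_apply fun_eq_iff)
  then show ?thesis ..
qed

lemma skew_primitive_cases:
  fixes w :: "idx \<Rightarrow> 'k::field"
  assumes "\<forall>n::nat. n > 0 \<longrightarrow> q ^ n \<noteq> 1" and "skew_primitive q a c w"
  shows "c = a + 1 \<or> (\<exists>l. w = (\<lambda>u. l * (bas (a, 0) u - bas (c, 0) u)))"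
proof (cases "\<exists>x m. w (x, m) \<noteq> 0 \<and> m \<ge> 1")
  case True
  then show ?thesis
    using skew_primitive_y_degree[OF assms] by blast
next
  case False
  then show ?thesis
    using skew_primitive_y_free[OF assms(2)] by fastforce
qed

section \<open>Coalgebra automorphisms act on the powers of \<open>x\<close> by a shift\<close>

lemma Autc_grouplike:
  assumes \<phi>: "\<phi> \<in> Autc q" and g: "grouplike q g"
  shows "grouplike q (\<phi> g)"
proof -
  obtain r where r: "g = bas (r, 0)"
    using grouplike_imp_bas[OF g] by blast
  have "Delta q g = (\<lambda>w. g (fst w) * g (snd w))"
    using g by (simp add: grouplike_def)
  also have "\<dots> = bas ((r, 0), (r, 0))"
    by (auto simp: r bas_apply fun_eq_iff)
  finally have "Delta q (\<phi> g) = tensmap \<phi> (bas ((r, 0), (r, 0)))"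
    using g by (simp add: grouplike_def AutcD(3)[OF \<phi>])
  also have "\<dots> = (\<lambda>w. \<phi> g (fst w) * \<phi> g (snd w))"
    by (simp add: tensmap_bas r fun_eq_iff)
  finally show ?thesis
    using g by (simp add: grouplike_def Autc_fsupp[OF \<phi>] AutcD(4)[OF \<phi>])
qed

lemma Autc_bas_grouplike:
  assumes "\<phi> \<in> Autc q"
  obtains r where "\<phi> (bas (s, 0)) = bas (r, 0)"
  using grouplike_imp_bas[OF Autc_grouplike[OF assms grouplike_bas]] by blast

lemma Autc_skew_primitive_bas:
  fixes q :: "'k::field"
  assumes \<phi>: "\<phi> \<in> Autc q"
    and r: "\<phi> (bas (s, 0)) = bas (r, 0)" and t: "\<phi> (bas (s + 1, 0)) = bas (t, 0)"
  shows "skew_primitive q r t (\<phi> (bas (s, 1)))"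
proof -
  let ?z = "bas (s, 1) :: idx \<Rightarrow> 'k"
  let ?Dz = "\<lambda>w. ?z (fst w) * bas (s + 1, 0) (snd w) + bas (s, 0) (fst w) * ?z (snd w)"
  have supp: "supp ?Dz \<subseteq> {((s, 1), (s + 1, 0)), ((s, 0), (s, 1))}"
    by (auto simp: supp_def bas_apply)
  have "Delta q (\<phi> ?z) = tensmap \<phi> ?Dz"
    using skew_primitive_bas[of q s] by (simp add: skew_primitive_def AutcD(3)[OF \<phi>])
  also have "\<dots> = (\<lambda>w. \<phi> ?z (fst w) * bas (t, 0) (snd w) + bas (r, 0) (fst w) * \<phi> ?z (snd w))"
    by (rule ext, subst tensmap_eq_sum_superset[OF _ supp])
      (simp_all add: bas_apply r[symmetric] t[symmetric])
  finally show ?thesis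
    by (simp add: skew_primitive_def Autc_fsupp[OF \<phi>])
qed

lemma Autc_bas_Suc:
  fixes q :: "'k::field"
  assumes q: "\<forall>n::nat. n > 0 \<longrightarrow> q ^ n \<noteq> 1" and \<phi>: "\<phi> \<in> Autc q"
    and r: "\<phi> (bas (s, 0)) = bas (r, 0)"
  shows "\<phi> (bas (s + 1, 0)) = bas (r + 1, 0)"
proof -
  obtain t where t: "\<phi> (bas (s + 1, 0)) = bas (t, 0)"
    using Autc_bas_grouplike[OF \<phi>] .
  consider "t = r + 1" | l where "\<phi> (bas (s, 1)) = (\<lambda>u. l * (bas (r, 0) u - bas (t, 0) u))"
    using skew_primitive_cases[OF q Autc_skew_primitive_bas[OF \<phi> r t]] by blast
  then show ?thesis
  proof cases
    case 1
    then show ?thesis using t by simp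
  next
    case (2 l)
    have lin_comb: "(\<lambda>u. l * (bas (s, 0) u - bas (s + 1, 0) u)) \<in> Hc"
      by (rule fsupp_subset[of "{(s, 0), (s + 1, 0)}"]) (auto simp: supp_def bas_apply)
    have "\<phi> (bas (s, 1)) = \<phi> (\<lambda>u. l * (bas (s, 0) u - bas (s + 1, 0) u))"
      using 2 by (simp add: klinear_smult_diff[OF AutcD(2)[OF \<phi>]] r t)
    moreover have "inj_on \<phi> Hc"
      using Autc_bij_betw[OF \<phi>] by (simp add: bij_betw_def)
    ultimately have "(bas (s, 1) :: idx \<Rightarrow> 'k) = (\<lambda>u. l * (bas (s, 0) u - bas (s + 1, 0) u))"
      using lin_comb by (meson bas_in_fsupp inj_onD)
    from fun_cong[OF this, of "(s, 1)"] show ?thesis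
      by (simp add: bas_apply)
  qed
qed

lemma Autc_bas_shift:
  fixes q :: "'k::field"
  assumes q: "\<forall>n::nat. n > 0 \<longrightarrow> q ^ n \<noteq> 1" and \<phi>: "\<phi> \<in> Autc q"
    and r: "\<phi> (bas (0, 0)) = bas (r, 0)"
  shows "\<phi> (bas (s, 0)) = bas (s + r, 0)"
proof (induction s rule: int_induct[where k = 0])
  case base
  show ?case using r by simp
next
  case (step1 i)
  then show ?case
    using Autc_bas_Suc[OF q \<phi> step1(2)] by (simp add: add_ac)
next
  case (step2 i)
  obtain t where t: "\<phi> (bas (i - 1, 0)) = bas (t, 0)"
    using Autc_bas_grouplike[OF \<phi>] .
  have "\<phi> (bas (i - 1 + 1, 0)) = bas (t + 1, 0)"
    by (rule Autc_bas_Suc[OF q \<phi> t])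
  then have "t = i - 1 + r"
    using step2(2) by (simp add: bas_inject)
  then show ?case
    using t by simp
qed

lemma theta_apply: "f \<in> Hc \<Longrightarrow> theta r f = (\<lambda>u. f (fst u - r, snd u))"
  by (simp add: theta_def)

lemma supp_theta: "f \<in> Hc \<Longrightarrow> supp (theta r f) = (\<lambda>v. (fst v + r, snd v)) ` supp f"
  by (auto simp: theta_apply supp_def image_iff) (metis diff_add_cancel)

lemma theta_fsupp: "f \<in> Hc \<Longrightarrow> theta r f \<in> Hc"
  by (simp add: fsupp_def supp_theta)

lemma theta_bas: "theta r (bas (n, m)) = bas (n + r, m)"
  by (auto simp: theta_apply bas_apply fun_eq_iff)

lemma theta_0: "theta 0 = (\<lambda>f\<in>Hc. f)"
  by (auto simp: theta_def fun_eq_iff)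

lemma theta_theta: "f \<in> Hc \<Longrightarrow> theta r (theta s f) = theta (r + s) f"
  using theta_apply[OF theta_fsupp, of f r s] by (simp add: theta_apply algebra_simps)

lemma compose_theta: "compose Hc (theta r) (theta s) = theta (r + s)"
  by (auto simp: compose_def theta_theta fun_eq_iff) (simp add: theta_def)

lemma theta_Bij: "theta r \<in> Bij Hc"
proof -
  have "bij_betw (theta r) Hc Hc"
    by (rule bij_betw_byWitness[where f' = "theta (- r)"]) (auto simp: theta_theta theta_fsupp theta_0)
  then show ?thesis
    by (simp add: Bij_def theta_def)
qed

lemma klinear_theta: "klinear (theta r)"
  by (simp add: klinear_def theta_apply fsupp_add fsupp_smult)

lemma eps_theta:
  assumes f: "f \<in> Hc"
  shows "eps (theta r f) = eps f"
proof -
  have "eps (theta r f) = (\<Sum>u\<in>(\<lambda>v. (fst v + r, snd v)) ` supp f. theta r f u * (if snd u = 0 then 1 else 0))"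
    by (simp add: eps_def supp_theta[OF f])
  also have "\<dots> = eps f"
    by (subst sum.reindex) (auto simp: inj_on_def theta_apply f eps_def)
  finally show ?thesis .
qed

lemma tensmap_theta:
  assumes F: "F \<in> fsupp"
  shows "tensmap (theta r) F ((a, b), (c, d)) = F ((a - r, b), (c - r, d))"
proof -
  have "tensmap (theta r) F ((a, b), (c, d)) = (\<Sum>p\<in>supp F. if p = ((a - r, b), (c - r, d)) then F p else 0)"
    unfolding tensmap_def by (rule sum.cong) (auto simp: theta_bas bas_apply split: if_splits)
  also have "\<dots> = F ((a - r, b), (c - r, d))"
    by (rule sum_supp_delta[OF F])
  finally show ?thesis .
qed

lemma Delta_theta:
  assumes f: "f \<in> Hc"
  shows "Delta q (theta r f) = tensmap (theta r) (Delta q f)"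
proof -
  have "Delta q (theta r f) ((a, b), (c, d)) = tensmap (theta r) (Delta q f) ((a, b), (c, d))" for a b c d
    by (simp only: Delta_apply[OF theta_fsupp[OF f]] tensmap_theta[OF Delta_fsupp[OF f]] Delta_apply[OF f])
      (simp add: theta_apply[OF f])
  then show ?thesis
    by (simp add: fun_eq_iff split_paired_all)
qed

lemma theta_in_Autc: "theta r \<in> Autc q"
  by (simp add: Autc_def theta_Bij klinear_theta Delta_theta eps_theta)

lemma theta_hom: "theta \<in> hom integer_group (AutcG q)"
  by (rule homI) (simp_all add: theta_in_Autc mult_AutcG compose_theta)

section \<open>The degree homomorphism \<open>Aut\<^sub>c(H) \<rightarrow> \<int>\<close>\<close>

definition autc_degree :: "((idx \<Rightarrow> 'k::field) \<Rightarrow> (idx \<Rightarrow> 'k)) \<Rightarrow> int" where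
  "autc_degree \<phi> = (THE r. \<phi> (bas (0, 0)) = bas (r, 0))"

lemma autc_degree_eqI: "\<phi> (bas (0, 0)) = bas (r, 0) \<Longrightarrow> autc_degree \<phi> = r"
  by (simp add: autc_degree_def bas_inject)

lemma Autc_bas_0: "\<phi> \<in> Autc q \<Longrightarrow> \<phi> (bas (0, 0)) = bas (autc_degree \<phi>, 0)"
  by (metis Autc_bas_grouplike autc_degree_eqI)

lemma Autc_bas_degree:
  fixes q :: "'k::field"
  assumes "\<forall>n::nat. n > 0 \<longrightarrow> q ^ n \<noteq> 1" and "\<phi> \<in> Autc q"
  shows "\<phi> (bas (s, 0)) = bas (s + autc_degree \<phi>, 0)"
  by (rule Autc_bas_shift[OF assms Autc_bas_0[OF assms(2)]])

lemma autc_degree_theta: "autc_degree (theta r) = r"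
  by (simp add: autc_degree_eqI theta_bas)

lemma autc_degree_hom:
  fixes q :: "'k::field"
  assumes "\<forall>n::nat. n > 0 \<longrightarrow> q ^ n \<noteq> 1"
  shows "autc_degree \<in> hom (AutcG q) integer_group"
proof (rule homI)
  fix \<phi> \<psi> assume "\<phi> \<in> carrier (AutcG q)" "\<psi> \<in> carrier (AutcG q)"
  then have "(\<phi> \<otimes>\<^bsub>AutcG q\<^esub> \<psi>) (bas (0, 0)) = bas (autc_degree \<psi> + autc_degree \<phi>, 0)"
    by (simp add: mult_AutcG_apply Autc_bas_0 Autc_bas_degree[OF assms])
  then show "autc_degree (\<phi> \<otimes>\<^bsub>AutcG q\<^esub> \<psi>) = autc_degree \<phi> \<otimes>\<^bsub>integer_group\<^esub> autc_degree \<psi>"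
    by (simp add: autc_degree_eqI)
qed simp

lemma group_hom_autc_degree:
  fixes q :: "'k::field"
  assumes "\<forall>n::nat. n > 0 \<longrightarrow> q ^ n \<noteq> 1"
  shows "group_hom (AutcG q) integer_group autc_degree"
  by (simp add: group_hom_def group_hom_axioms_def group_AutcG autc_degree_hom[OF assms])

lemma Aut0_eq_kernel: "Aut0 q = kernel (AutcG q) integer_group autc_degree"
  by (auto simp: Aut0_def kernel_def Autc_bas_0 bas_inject)

lemma Aut0_inter_Theta: "Aut0 q \<inter> Theta = {\<one>\<^bsub>AutcG q\<^esub>}"
proof -
  have "theta r \<in> Aut0 q \<longleftrightarrow> r = 0" for r
    by (simp add: Aut0_eq_kernel kernel_def theta_in_Autc autc_degree_theta)
  then show ?thesis
    by (auto simp: Theta_def one_AutcG theta_0[symmetric])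
qed

lemma Aut0_mult_Theta:
  fixes q :: "'k::field"
  assumes q: "\<forall>n::nat. n > 0 \<longrightarrow> q ^ n \<noteq> 1"
  shows "Aut0 q <#>\<^bsub>AutcG q\<^esub> Theta = carrier (AutcG q)"
proof -
  interpret AutcG: group "AutcG q"
    by (rule group_AutcG)
  interpret degree: group_hom "AutcG q" integer_group autc_degree
    by (rule group_hom_autc_degree[OF q])
  have Theta_carrier: "Theta \<subseteq> carrier (AutcG q)"
    by (auto simp: Theta_def theta_in_Autc)
  have "\<phi> \<in> Aut0 q <#>\<^bsub>AutcG q\<^esub> Theta" if \<phi>: "\<phi> \<in> carrier (AutcG q)" for \<phi>
  proof -
    let ?d = "autc_degree \<phi>"
    have "\<phi> \<otimes>\<^bsub>AutcG q\<^esub> theta (- ?d) \<in> Aut0 q"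
      using \<phi> theta_in_Autc[of "- ?d" q] AutcG.m_closed[of \<phi> "theta (- ?d)"]
      by (simp add: Aut0_eq_kernel kernel_def degree.hom_mult autc_degree_theta)
    moreover have "theta (- ?d) \<otimes>\<^bsub>AutcG q\<^esub> theta ?d = \<one>\<^bsub>AutcG q\<^esub>"
      by (simp add: mult_AutcG theta_in_Autc compose_theta theta_0 one_AutcG)
    then have "\<phi> = \<phi> \<otimes>\<^bsub>AutcG q\<^esub> theta (- ?d) \<otimes>\<^bsub>AutcG q\<^esub> theta ?d"
      using \<phi> by (simp add: AutcG.m_assoc theta_in_Autc)
    ultimately show ?thesis
      unfolding set_mult_def Theta_def by blast
  qed
  moreover have "Aut0 q <#>\<^bsub>AutcG q\<^esub> Theta \<subseteq> carrier (AutcG q)"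
    using Theta_carrier by (intro AutcG.set_mult_closed) (auto simp: Aut0_def)
  ultimately show ?thesis
    by blast
qed

theorem proposition2p4:
  fixes q :: "'k::field"
  assumes "q \<noteq> 0" and "\<forall>n::nat. n > 0 \<longrightarrow> q ^ n \<noteq> 1"
  shows "Aut0 q \<lhd> AutcG q
       \<and> subgroup (Theta :: ((idx \<Rightarrow> 'k) \<Rightarrow> (idx \<Rightarrow> 'k)) set) (AutcG q)
       \<and> Aut0 q \<inter> Theta = {\<one>\<^bsub>AutcG q\<^esub>}
       \<and> Aut0 q <#>\<^bsub>AutcG q\<^esub> Theta = carrier (AutcG q)"
proof -
  interpret degree: group_hom "AutcG q" integer_group autc_degree
    by (rule group_hom_autc_degree[OF assms(2)])
  interpret shift: group_hom integer_group "AutcG q" theta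
    by (simp add: group_hom_def group_hom_axioms_def group_AutcG theta_hom)
  have "Aut0 q \<lhd> AutcG q"
    unfolding Aut0_eq_kernel by (rule degree.normal_kernel)
  moreover have "subgroup Theta (AutcG q)"
    using shift.img_is_subgroup by (simp add: Theta_def)
  ultimately show ?thesis
    using Aut0_inter_Theta Aut0_mult_Theta[OF assms(2)] by blast
qed

end
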